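(* Let $\mathcal{M}\subseteq\mathcal{M}_1$ and $\mathbb{P}\in\mathcal{M}$. Let $\alpha$ be of the form $\alpha(Q)=\widetilde\alpha(Q)$ for $Q\in\mathcal{Q}^{\mathbb{P}}$, $\alpha(Q)=+\infty$ for $Q\in\mathcal{M}_1\setminus\mathcal{Q}^{\mathbb{P}}$, where $\mathcal{Q}^{\mathbb{P}}$ is a weak-$*$-closed subset of $\mathcal{P}^{\mathbb{P}}$, $\widetilde\alpha<\infty$ on $\mathcal{Q}^{\mathbb{P}}$ and $\inf_{\mathcal{Q}^{\mathbb{P}}}\widetilde\alpha>-\infty$. Then for all $X\in\mathcal{X}^{\mathcal{M}}\cap L^\infty(\mathbb{P})$, $\widehat\rho^{\mathcal{M}}(X)=\widehat\rho^{\mathbb{P}}(X)=\rho^{\mathbb{P}}(X)$.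
   Context: $(\Omega,\mathcal{F})$ is a measurable space, $\mathcal{M}_1$ the set of probability measures on it with the topology of weak (weak-$*$) convergence, $\mathcal{X}$ the space of pointwise bounded $\mathcal{F}$-measurable real functions, $L^\infty(P)=L^\infty(\Omega,\mathcal{F},P)$, $\mathcal{P}^P=\{Q\in\mathcal{M}_1:Q\ll P\}$. With $\alpha$ as in the claim, $\rho(X)=\sup_{Q\in\mathcal{M}_1}\{\mathbb{E}_Q[-X]-\alpha(Q)\}$ on $\mathcal{X}$ (assumed real-valued). For $P\in\mathcal{M}_1$, $X\in L^\infty(P)$: $\rho^P(X)=\inf_{\{\widetilde X\in\mathcal{X}:P(\widetilde X=X)=1\}}\rho(\widetilde X)$ and $\widehat\rho^P(X)=\sup_{Q\in\mathcal{P}^P}\{\mathbb{E}_Q[-X]-\alpha(Q)\}$. $\mathcal{X}^{\mathcal{M}}=\bigcap_{P\in\mathcal{M}}L^\infty(P)$ and $\widehat\rho^{\mathcal{M}}(X)=\sup_{P\in\mathcal{M}}\widehat\rho^P(X)$. *)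

theory Defs
  imports "HOL-Probability.Probability"
begin

text \<open>The measurable space (Omega, F) is represented by a measure Msp; only its
  space and sigma-algebra are used.\<close>

definition M1 :: "'a measure \<Rightarrow> 'a measure set" where
  "M1 Msp = {Q. prob_space Q \<and> sets Q = sets Msp}"

definition Xsp :: "'a measure \<Rightarrow> ('a \<Rightarrow> real) set" where
  "Xsp Msp = {X. X \<in> borel_measurable Msp \<and> (\<exists>C. \<forall>w\<in>space Msp. \<bar>X w\<bar> \<le> C)}"

text \<open>L-infinity(P), as a set of (representative) functions: measurable and P-essentially bounded.\<close>
definition Linf :: "'a measure \<Rightarrow> ('a \<Rightarrow> real) set" where
  "Linf P = {X. X \<in> borel_measurable P \<and> (\<exists>C. AE w in P. \<bar>X w\<bar> \<le> C)}"

definition Pabs :: "'a measure \<Rightarrow> 'a measure \<Rightarrow> 'a measure set" where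
  "Pabs Msp P = {Q \<in> M1 Msp. absolutely_continuous P Q}"

text \<open>Closure in the weak-* topology on M1, i.e. the coarsest topology making all maps
  Q \<mapsto> E_Q[f], f bounded measurable, continuous (basic neighbourhoods).\<close>
definition weak_star_closure :: "'a measure \<Rightarrow> 'a measure set \<Rightarrow> 'a measure set" where
  "weak_star_closure Msp S = {Q \<in> M1 Msp. \<forall>Fs (e::real). finite Fs \<and> Fs \<subseteq> Xsp Msp \<and> e > 0 \<longrightarrow>
      (\<exists>Q'\<in>S. \<forall>f\<in>Fs. \<bar>integral\<^sup>L Q f - integral\<^sup>L Q' f\<bar> < e)}"

definition weak_star_closed :: "'a measure \<Rightarrow> 'a measure set \<Rightarrow> bool" where
  "weak_star_closed Msp S \<longleftrightarrow> S \<subseteq> M1 Msp \<and> weak_star_closure Msp S \<subseteq> S"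

definition rho :: "'a measure \<Rightarrow> ('a measure \<Rightarrow> ereal) \<Rightarrow> ('a \<Rightarrow> real) \<Rightarrow> ereal" where
  "rho Msp \<alpha> X = (SUP Q\<in>M1 Msp. ereal (integral\<^sup>L Q (\<lambda>w. - X w)) - \<alpha> Q)"

definition rhoP :: "'a measure \<Rightarrow> ('a measure \<Rightarrow> ereal) \<Rightarrow> 'a measure \<Rightarrow> ('a \<Rightarrow> real) \<Rightarrow> ereal" where
  "rhoP Msp \<alpha> P X = (INF Y\<in>{Y \<in> Xsp Msp. AE w in P. Y w = X w}. rho Msp \<alpha> Y)"

definition rhohatP :: "'a measure \<Rightarrow> ('a measure \<Rightarrow> ereal) \<Rightarrow> 'a measure \<Rightarrow> ('a \<Rightarrow> real) \<Rightarrow> ereal" where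
  "rhohatP Msp \<alpha> P X = (SUP Q\<in>Pabs Msp P. ereal (integral\<^sup>L Q (\<lambda>w. - X w)) - \<alpha> Q)"

definition XM :: "'a measure set \<Rightarrow> ('a \<Rightarrow> real) set" where
  "XM \<M> = (\<Inter>P\<in>\<M>. Linf P)"

definition rhohatM :: "'a measure \<Rightarrow> ('a measure \<Rightarrow> ereal) \<Rightarrow> 'a measure set \<Rightarrow> ('a \<Rightarrow> real) \<Rightarrow> ereal" where
  "rhohatM Msp \<alpha> \<M> X = (SUP P\<in>\<M>. rhohatP Msp \<alpha> P X)"

end

theory Submission
  imports Defs
begin

text \<open>Since the penalty is infinite outside \<open>QP \<subseteq> Pabs Msp P\<close>, each of the three risk
  measures is the penalized supremum over \<open>QP\<close> alone; and the expectations under measures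
  \<open>Q \<ll> P\<close> depend only on the \<open>P\<close>-a.s. class of \<open>X\<close>.\<close>

lemma SUP_le_SUP_if_bot_outside:
  fixes f :: "'b \<Rightarrow> ereal"
  assumes "\<forall>x\<in>A - B. f x = -\<infinity>"
  shows "(SUP x\<in>A. f x) \<le> (SUP x\<in>B. f x)"
proof (rule SUP_least)
  fix x assume "x \<in> A"
  then show "f x \<le> (SUP x\<in>B. f x)"
    using assms by (cases "x \<in> B") (auto intro: SUP_upper)
qed

definition penalized_sup :: "('a measure \<Rightarrow> ereal) \<Rightarrow> 'a measure set \<Rightarrow> ('a \<Rightarrow> real) \<Rightarrow> ereal" where
  "penalized_sup \<alpha> A X = (SUP Q\<in>A. ereal (integral\<^sup>L Q (\<lambda>w. - X w)) - \<alpha> Q)"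

lemma penalized_sup_le_support:
  assumes "\<forall>Q\<in>A - QP. \<alpha> Q = \<infinity>"
  shows "penalized_sup \<alpha> A X \<le> penalized_sup \<alpha> QP X"
  unfolding penalized_sup_def by (rule SUP_le_SUP_if_bot_outside) (use assms in auto)

lemma penalized_sup_eq_support:
  assumes "QP \<subseteq> A" and "\<forall>Q\<in>A - QP. \<alpha> Q = \<infinity>"
  shows "penalized_sup \<alpha> A X = penalized_sup \<alpha> QP X"
proof (rule antisym)
  show "penalized_sup \<alpha> A X \<le> penalized_sup \<alpha> QP X"
    using assms(2) by (rule penalized_sup_le_support)
  show "penalized_sup \<alpha> QP X \<le> penalized_sup \<alpha> A X"
    unfolding penalized_sup_def using assms(1) by (rule SUP_subset_mono) simp
qed

lemma integral_cong_AE_absolutely_continuous: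
  assumes "absolutely_continuous P Q" and "sets Q = sets P"
    and "X \<in> borel_measurable Q" and "Y \<in> borel_measurable Q"
    and "AE w in P. X w = Y w"
  shows "integral\<^sup>L Q X = integral\<^sup>L Q Y"
proof (rule integral_cong_AE)
  show "AE w in Q. X w = Y w"
    using absolutely_continuous_AE[OF _ assms(1,5)] assms(2) by simp
qed (use assms(3,4) in auto)

lemma penalized_sup_cong_AE:
  assumes "QP \<subseteq> Pabs Msp P" and "sets P = sets Msp"
    and "X \<in> borel_measurable Msp" and "Y \<in> borel_measurable Msp"
    and "AE w in P. Y w = X w"
  shows "penalized_sup \<alpha> QP Y = penalized_sup \<alpha> QP X"
  unfolding penalized_sup_def
proof (rule SUP_cong[OF refl])
  fix Q assume "Q \<in> QP"
  then have Q: "sets Q = sets Msp" "absolutely_continuous P Q"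
    using assms(1) unfolding Pabs_def M1_def by auto
  have "integral\<^sup>L Q (\<lambda>w. - Y w) = integral\<^sup>L Q (\<lambda>w. - X w)"
    using assms(3-5) Q assms(2)
    by (intro integral_cong_AE_absolutely_continuous) (auto simp: measurable_cong_sets[OF Q(1) refl])
  then show "ereal (integral\<^sup>L Q (\<lambda>w. - Y w)) - \<alpha> Q = ereal (integral\<^sup>L Q (\<lambda>w. - X w)) - \<alpha> Q"
    by simp
qed

lemma Linf_AE_eq_Xsp:
  assumes "X \<in> Linf P" and "sets P = sets Msp"
  obtains Y where "Y \<in> Xsp Msp" and "AE w in P. Y w = X w"
proof -
  obtain C where C: "AE w in P. \<bar>X w\<bar> \<le> C"
    using assms(1) unfolding Linf_def by auto
  have X: "X \<in> borel_measurable Msp"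
    using assms unfolding Linf_def by (simp add: measurable_cong_sets[OF assms(2) refl])
  define Y where "Y w = (if \<bar>X w\<bar> \<le> C then X w else 0)" for w
  have "Y \<in> Xsp Msp"
    unfolding Xsp_def
  proof (intro CollectI conjI exI ballI)
    show "Y \<in> borel_measurable Msp"
      unfolding Y_def using X by measurable
    show "\<bar>Y w\<bar> \<le> \<bar>C\<bar>" for w
      by (auto simp: Y_def)
  qed
  moreover have "AE w in P. Y w = X w"
    using C by eventually_elim (auto simp: Y_def)
  ultimately show thesis by (rule that)
qed

lemma rhoP_eq_penalized_sup:
  assumes "QP \<subseteq> Pabs Msp P" and "\<forall>Q\<in>M1 Msp - QP. \<alpha> Q = \<infinity>"
    and "sets P = sets Msp" and "X \<in> Linf P"
  shows "rhoP Msp \<alpha> P X = penalized_sup \<alpha> QP X"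
proof -
  let ?V = "{Y \<in> Xsp Msp. AE w in P. Y w = X w}"
  have X: "X \<in> borel_measurable Msp"
    using assms(3,4) unfolding Linf_def by (simp add: measurable_cong_sets[OF assms(3) refl])
  have "QP \<subseteq> M1 Msp"
    using assms(1) unfolding Pabs_def by auto
  then have "rho Msp \<alpha> Y = penalized_sup \<alpha> QP Y" for Y
    unfolding rho_def penalized_sup_def[symmetric]
    using assms(2) by (rule penalized_sup_eq_support)
  also have "penalized_sup \<alpha> QP Y = penalized_sup \<alpha> QP X" if "Y \<in> ?V" for Y
    using that X by (intro penalized_sup_cong_AE[OF assms(1,3)]) (auto simp: Xsp_def)
  finally have "rhoP Msp \<alpha> P X = (INF Y\<in>?V. penalized_sup \<alpha> QP X)"
    unfolding rhoP_def by (intro INF_cong) auto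
  moreover have "?V \<noteq> {}"
    using Linf_AE_eq_Xsp[OF assms(4,3)] by blast
  ultimately show ?thesis by simp
qed

theorem corollary5p9:
  fixes Msp :: "'a measure" and \<M> :: "'a measure set" and P :: "'a measure"
    and \<alpha> :: "'a measure \<Rightarrow> ereal" and QP :: "'a measure set"
  assumes rho_real: "\<forall>X\<in>Xsp Msp. \<bar>rho Msp \<alpha> X\<bar> \<noteq> \<infinity>"
    and M_sub: "\<M> \<subseteq> M1 Msp" and P_in: "P \<in> \<M>"
    and QP_sub: "QP \<subseteq> Pabs Msp P" and QP_closed: "weak_star_closed Msp QP"
    and alpha_out: "\<forall>Q\<in>M1 Msp - QP. \<alpha> Q = \<infinity>"
    and alpha_fin: "\<forall>Q\<in>QP. \<alpha> Q < \<infinity>"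
    and alpha_inf: "(INF Q\<in>QP. \<alpha> Q) > - \<infinity>"
  shows "\<forall>X \<in> XM \<M> \<inter> Linf P.
           rhohatM Msp \<alpha> \<M> X = rhohatP Msp \<alpha> P X \<and> rhohatP Msp \<alpha> P X = rhoP Msp \<alpha> P X"
proof
  fix X assume X: "X \<in> XM \<M> \<inter> Linf P"
  have Pabs_sub: "Pabs Msp P' \<subseteq> M1 Msp" for P'
    unfolding Pabs_def by auto
  have rhohatP: "rhohatP Msp \<alpha> P' X = penalized_sup \<alpha> (Pabs Msp P') X" for P'
    unfolding rhohatP_def penalized_sup_def ..
  have rhohatP_le: "rhohatP Msp \<alpha> P' X \<le> penalized_sup \<alpha> QP X" for P'
    unfolding rhohatP using Pabs_sub alpha_out by (intro penalized_sup_le_support) auto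
  have rhohatP_P: "rhohatP Msp \<alpha> P X = penalized_sup \<alpha> QP X"
    unfolding rhohatP using QP_sub Pabs_sub alpha_out by (intro penalized_sup_eq_support) auto
  have "rhohatM Msp \<alpha> \<M> X = penalized_sup \<alpha> QP X"
    unfolding rhohatM_def
    by (rule antisym[OF SUP_least[OF rhohatP_le]]) (metis P_in SUP_upper rhohatP_P)
  moreover have "sets P = sets Msp"
    using M_sub P_in unfolding M1_def by auto
  then have "rhoP Msp \<alpha> P X = penalized_sup \<alpha> QP X"
    using QP_sub alpha_out X by (intro rhoP_eq_penalized_sup) auto
  ultimately show "rhohatM Msp \<alpha> \<M> X = rhohatP Msp \<alpha> P X \<and> rhohatP Msp \<alpha> P X = rhoP Msp \<alpha> P X"
    using rhohatP_P by simp
qed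

end
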